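(* The two-player Tower of Hanoi game under normal play on $l\ge 4$ pegs with $n\ge 3$ disks is a draw (neither player can force a win), for each of the ending conditions (EC1)–(EC5).
   Context: Tower of Hanoi on $l$ pegs (labeled $1,\dots,l$) with $n$ disks of pairwise distinct sizes: a position assigns each disk to a peg, disks on each peg stacked with sizes decreasing from bottom to top. A legal move transfers the top disk of one peg to a different peg that is empty or has a larger top disk. A tower position is one with all disks on one peg. Two-player game: Anh (first player) and Bao (second player) alternate moves starting from the position with all disks on Peg 1; a player may not move the disk that the opponent moved in the immediately preceding move. The game ends when the tower has been transferred to a final peg, according to one fixed ending condition: (EC1) all disks on a given peg distinct from Peg 1; (EC2) all disks on Peg 1, the largest disk having been moved at least once; (EC3) all disks on Peg 1, the smallest disk having been moved at least once; (EC4) all disks on any peg, the largest disk having been moved at least once; (EC5) all disks on any peg, the smallest disk having been moved at least once. A move creating a tower position that does not end the game (tower on a non-final peg) is not allowed. Normal play: the player who makes the last (game-ending) move wins; if neither player can force a win, the game is a draw. *)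

theory Defs
  imports Main
begin

text \<open>Pegs are labelled 1..l; Peg 1 is the start peg.  Disks are 0..<n, disk d being
  smaller than disk e iff d < e (disk 0 smallest, disk n-1 largest).  Since disks on a peg
  are always stacked in decreasing size, a position is just the map disk -> peg.\<close>

datatype ending_cond = EC1 nat | EC2 | EC3 | EC4 | EC5

record hstate =
  pos :: "nat \<Rightarrow> nat"
  lastd :: "nat option"      \<comment> \<open>disk moved in the immediately preceding move\<close>
  bigm :: bool               \<comment> \<open>largest disk has been moved at least once\<close>
  smallm :: bool             \<comment> \<open>smallest disk has been moved at least once\<close>

definition init_state :: hstate where
  "init_state = \<lparr>pos = (\<lambda>_. 1), lastd = None, bigm = False, smallm = False\<rparr>"

definition is_tower :: "nat \<Rightarrow> (nat \<Rightarrow> nat) \<Rightarrow> bool" where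
  "is_tower n p \<longleftrightarrow> (\<exists>q. \<forall>e<n. p e = q)"

definition tower_on :: "nat \<Rightarrow> (nat \<Rightarrow> nat) \<Rightarrow> nat \<Rightarrow> bool" where
  "tower_on n p q \<longleftrightarrow> (\<forall>e<n. p e = q)"

fun game_ends :: "nat \<Rightarrow> ending_cond \<Rightarrow> hstate \<Rightarrow> bool" where
  "game_ends n (EC1 f) s = tower_on n (pos s) f"
| "game_ends n EC2 s = (tower_on n (pos s) 1 \<and> bigm s)"
| "game_ends n EC3 s = (tower_on n (pos s) 1 \<and> smallm s)"
| "game_ends n EC4 s = (is_tower n (pos s) \<and> bigm s)"
| "game_ends n EC5 s = (is_tower n (pos s) \<and> smallm s)"

definition do_move :: "nat \<Rightarrow> hstate \<Rightarrow> nat \<Rightarrow> nat \<Rightarrow> hstate" where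
  "do_move n s d p = \<lparr>pos = (pos s)(d := p), lastd = Some d,
                      bigm = (bigm s \<or> d = n - 1), smallm = (smallm s \<or> d = 0)\<rparr>"

definition legal :: "nat \<Rightarrow> nat \<Rightarrow> ending_cond \<Rightarrow> hstate \<Rightarrow> nat \<Rightarrow> nat \<Rightarrow> bool" where
  "legal l n ec s d p \<longleftrightarrow>
     d < n \<and> 1 \<le> p \<and> p \<le> l \<and> pos s d \<noteq> p \<and>
     (\<forall>e<n. pos s e = pos s d \<longrightarrow> d \<le> e) \<and>
     (\<forall>e<n. pos s e = p \<longrightarrow> d < e) \<and>
     lastd s \<noteq> Some d \<and>
     (is_tower n (pos (do_move n s d p)) \<longrightarrow> game_ends n ec (do_move n s d p))"

text \<open>The player to move in state s can force a win (i.e. force making the game-ending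
  move after finitely many moves).  A player with no legal move counts as losing.\<close>
inductive can_force_win :: "nat \<Rightarrow> nat \<Rightarrow> ending_cond \<Rightarrow> hstate \<Rightarrow> bool"
  for l n ec where
  "\<lbrakk> legal l n ec s d p;
     game_ends n ec (do_move n s d p) \<or>
     (\<forall>d' p'. legal l n ec (do_move n s d p) d' p' \<longrightarrow>
        \<not> game_ends n ec (do_move n (do_move n s d p) d' p') \<and>
        can_force_win l n ec (do_move n (do_move n s d p) d' p')) \<rbrakk>
   \<Longrightarrow> can_force_win l n ec s"

definition forced_loss :: "nat \<Rightarrow> nat \<Rightarrow> ending_cond \<Rightarrow> hstate \<Rightarrow> bool" where
  "forced_loss l n ec s \<longleftrightarrow>
     (\<forall>d p. legal l n ec s d p \<longrightarrow>
        \<not> game_ends n ec (do_move n s d p) \<and> can_force_win l n ec (do_move n s d p))"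

definition valid_ec :: "nat \<Rightarrow> ending_cond \<Rightarrow> bool" where
  "valid_ec l ec = (case ec of EC1 f \<Rightarrow> 2 \<le> f \<and> f \<le> l | _ \<Rightarrow> True)"

text \<open>Draw: neither Anh (first player) nor Bao (second player) can force a win.\<close>
definition is_draw :: "nat \<Rightarrow> nat \<Rightarrow> ending_cond \<Rightarrow> bool" where
  "is_draw l n ec \<longleftrightarrow> \<not> can_force_win l n ec init_state \<and> \<not> forced_loss l n ec init_state"

end

theory Submission
  imports Defs
begin

text \<open>No tower position is ever reached, whatever the ending condition.  Call a position
  blocked if the disks other than the smallest are not all on one peg, or the smallest disk has
  just been moved: then no legal move creates a tower, since only the smallest disk could join
  the others.  From every non-tower position the player to move can reach a blocked one: move
  the smallest disk to a third peg if allowed, otherwise move a larger disk so that the larger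
  disks are (or stay) spread over two pegs, which four pegs always permit.  Thus a player
  aiming to win always faces a blocked position after the opponent's reply; as the opening move
  cannot create a tower either, neither player can force a win.\<close>

definition hanoi_move :: "nat \<Rightarrow> (nat \<Rightarrow> nat) \<Rightarrow> nat \<Rightarrow> nat \<Rightarrow> bool" where
  "hanoi_move n f d p \<longleftrightarrow>
     d < n \<and> f d \<noteq> p \<and> (\<forall>e<n. f e = f d \<longrightarrow> d \<le> e) \<and> (\<forall>e<n. f e = p \<longrightarrow> d < e)"

definition upper_tower :: "nat \<Rightarrow> (nat \<Rightarrow> nat) \<Rightarrow> bool" where
  "upper_tower n f \<longleftrightarrow> (\<exists>q. \<forall>e\<in>{1..<n}. f e = q)"

definition tower_blocked :: "nat \<Rightarrow> hstate \<Rightarrow> bool" where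
  "tower_blocked n s \<longleftrightarrow> \<not> upper_tower n (pos s) \<or> lastd s = Some 0"

definition no_tower_move :: "nat \<Rightarrow> nat \<Rightarrow> ending_cond \<Rightarrow> hstate \<Rightarrow> bool" where
  "no_tower_move l n ec s \<longleftrightarrow> (\<forall>d p. legal l n ec s d p \<longrightarrow> \<not> is_tower n ((pos s)(d := p)))"

lemma pos_do_move [simp]: "pos (do_move n s d p) = (pos s)(d := p)"
  and lastd_do_move [simp]: "lastd (do_move n s d p) = Some d"
  by (simp_all add: do_move_def)

lemma legal_iff:
  "legal l n ec s d p \<longleftrightarrow>
     hanoi_move n (pos s) d p \<and> 1 \<le> p \<and> p \<le> l \<and> lastd s \<noteq> Some d \<and>
     (is_tower n ((pos s)(d := p)) \<longrightarrow> game_ends n ec (do_move n s d p))"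
  by (auto simp: legal_def hanoi_move_def)

lemma legalI:
  assumes "hanoi_move n (pos s) d p" "1 \<le> p" "p \<le> l" "lastd s \<noteq> Some d"
    and "\<not> is_tower n ((pos s)(d := p))"
  shows "legal l n ec s d p"
  using assms by (simp add: legal_iff)

lemma is_tower_imp_upper_tower: "is_tower n f \<Longrightarrow> upper_tower n f"
  by (auto simp: is_tower_def upper_tower_def)

lemma game_ends_imp_is_tower: "game_ends n ec s \<Longrightarrow> is_tower n (pos s)"
  by (cases ec) (auto simp: is_tower_def tower_on_def)

lemma not_is_towerI: "x < n \<Longrightarrow> y < n \<Longrightarrow> f x \<noteq> f y \<Longrightarrow> \<not> is_tower n f"
  by (auto simp: is_tower_def)

lemma not_upper_towerI:
  "x \<in> {1..<n} \<Longrightarrow> y \<in> {1..<n} \<Longrightarrow> f x \<noteq> f y \<Longrightarrow> \<not> upper_tower n f"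
  unfolding upper_tower_def by fastforce

lemma fresh_peg:
  assumes "finite A" "card A < k"
  obtains p :: nat where "p \<in> {1..k}" "p \<notin> A"
proof -
  have "\<not> {1..k} \<subseteq> A"
    using assms card_mono[of A "{1..k}"] by auto
  then show thesis using that by blast
qed

lemma hanoi_move_between:
  assumes "p \<noteq> q" "x < n" "f x \<in> {p, q}"
  obtains d r where "hanoi_move n f d r" "{f d, r} = {p, q}"
proof -
  obtain d where d: "d < n" "f d \<in> {p, q}"
    and least: "\<And>e. e < n \<Longrightarrow> f e \<in> {p, q} \<Longrightarrow> d \<le> e"
    using assms exists_least_iff[of "\<lambda>e. e < n \<and> f e \<in> {p, q}"] by (meson not_less)
  define r where "r = (if f d = p then q else p)"
  have "hanoi_move n f d r"
    unfolding hanoi_move_def using d least assms(1)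
    by (auto simp: r_def intro!: le_neq_implies_less)
  moreover have "{f d, r} = {p, q}" using d by (auto simp: r_def)
  ultimately show thesis by (rule that)
qed

lemma no_tower_move_if_tower_blocked:
  assumes "tower_blocked n s"
  shows "no_tower_move l n ec s"
  unfolding no_tower_move_def
proof (intro allI impI notI)
  fix d p
  assume legal: "legal l n ec s d p" and "is_tower n ((pos s)(d := p))"
  then obtain q where q: "\<forall>e<n. ((pos s)(d := p)) e = q" by (auto simp: is_tower_def)
  show False
  proof (cases "d = 0")
    case True
    then have "\<forall>e\<in>{1..<n}. pos s e = q"
      using q by (metis atLeastLessThan_iff fun_upd_other not_one_le_zero)
    then have "upper_tower n (pos s)" by (auto simp: upper_tower_def)
    moreover have "lastd s \<noteq> Some 0" using legal True by (simp add: legal_iff)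
    ultimately show False using assms by (simp add: tower_blocked_def)
  next
    case False
    have "d < n" using legal by (simp add: legal_iff hanoi_move_def)
    then have "pos s 0 = p" using q False by (metis fun_upd_other fun_upd_same gr0I less_trans)
    then show False using legal \<open>d < n\<close> by (auto simp: legal_iff hanoi_move_def)
  qed
qed

lemma no_tower_move_init_state:
  assumes "n \<ge> 2"
  shows "no_tower_move l n ec init_state"
  unfolding no_tower_move_def
proof (intro allI impI)
  fix d p
  assume "legal l n ec init_state d p"
  then have "d = 0" "p \<noteq> 1"
    using assms by (auto simp: legal_iff hanoi_move_def init_state_def)
  then show "\<not> is_tower n ((pos init_state)(d := p))"
    using assms by (intro not_is_towerI[of 0 n 1]) (auto simp: init_state_def)
qed

lemma move_smallest_to_tower_blocked:
  assumes "n \<ge> 2" "l \<ge> 3" "lastd s \<noteq> Some 0"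
  shows "\<exists>p. legal l n ec s 0 p \<and> tower_blocked n (do_move n s 0 p)"
proof -
  obtain p where p: "p \<in> {1..3}" "p \<notin> {pos s 0, pos s 1}"
    by (rule fresh_peg[of "{pos s 0, pos s 1}" 3]) (auto simp: card_insert_if)
  have "hanoi_move n (pos s) 0 p"
    using assms(1) p by (auto simp: hanoi_move_def intro: gr0I)
  moreover have "\<not> is_tower n ((pos s)(0 := p))"
    using assms(1) p by (intro not_is_towerI[of 0 n 1]) auto
  ultimately have "legal l n ec s 0 p"
    using assms p by (intro legalI) auto
  then show ?thesis by (auto simp: tower_blocked_def)
qed

lemma split_upper_tower:
  assumes "n \<ge> 3" "l \<ge> 3" "lastd s = Some 0"
    and "upper_tower n (pos s)" "\<not> is_tower n (pos s)"
  shows "\<exists>p. legal l n ec s 1 p \<and> \<not> upper_tower n ((pos s)(1 := p))"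
proof -
  obtain b where b: "\<forall>e\<in>{1..<n}. pos s e = b" using assms(4) by (auto simp: upper_tower_def)
  have "pos s 0 \<noteq> b"
  proof
    assume "pos s 0 = b"
    then have "\<forall>e<n. pos s e = b" using b by (metis atLeastLessThan_iff less_one not_le)
    then show False using assms(5) by (auto simp: is_tower_def)
  qed
  obtain p where p: "p \<in> {1..3}" "p \<notin> {pos s 0, b}"
    by (rule fresh_peg[of "{pos s 0, b}" 3]) (auto simp: card_insert_if)
  have p_empty: "\<forall>e<n. pos s e \<noteq> p"
    using b p by (metis atLeastLessThan_iff insertCI less_one not_le)
  have "hanoi_move n (pos s) 1 p"
    using assms(1) b p p_empty \<open>pos s 0 \<noteq> b\<close> by (auto simp: hanoi_move_def Suc_le_eq intro: gr0I)
  moreover have split: "\<not> upper_tower n ((pos s)(1 := p))"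
    using assms(1) b p by (intro not_upper_towerI[of 1 n 2]) auto
  ultimately have "legal l n ec s 1 p"
    using assms p is_tower_imp_upper_tower by (intro legalI) auto
  with split show ?thesis by blast
qed

text \<open>With c1, c2 avoiding the pegs of disk 0 and of some larger disk u, a move between c1
  and c2 leaves u behind; if both are empty, the top disk of u's peg moves to c1, away from the
  remaining larger disks.\<close>
lemma hanoi_move_keeping_upper_split:
  assumes "\<not> upper_tower n f"
  shows "\<exists>d r. hanoi_move n f d r \<and> r \<in> {1..4} \<and> d \<noteq> 0 \<and> \<not> upper_tower n (f(d := r))"
proof -
  obtain u where u: "u \<in> {1..<n}" "f u \<noteq> f 0"
    using assms unfolding upper_tower_def by blast
  obtain w where w: "w \<in> {1..<n}" "f w \<noteq> f u"
    using assms unfolding upper_tower_def by blast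
  obtain c1 where c1: "c1 \<in> {1..4}" "c1 \<notin> {f u, f 0}"
    by (rule fresh_peg[of "{f u, f 0}" 4]) (auto simp: card_insert_if)
  obtain c2 where c2: "c2 \<in> {1..4}" "c2 \<notin> {f u, f 0, c1}"
    by (rule fresh_peg[of "{f u, f 0, c1}" 4]) (auto simp: card_insert_if)
  show ?thesis
  proof (cases "\<exists>x<n. f x \<in> {c1, c2}")
    case True
    then obtain x where "x < n" "f x \<in> {c1, c2}" by blast
    then obtain d r where move: "hanoi_move n f d r" "{f d, r} = {c1, c2}"
      using c2 hanoi_move_between[of c1 c2 x n f] by blast
    have "d \<noteq> 0" "d \<noteq> u" "r \<noteq> f u" using move c1 c2 by auto
    moreover have "d \<in> {1..<n}" using move \<open>d \<noteq> 0\<close> by (auto simp: hanoi_move_def)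
    ultimately have "\<not> upper_tower n (f(d := r))"
      using u by (intro not_upper_towerI[of d n u]) auto
    moreover have "r \<in> {1..4}" using move c1 c2 by auto
    ultimately show ?thesis using move \<open>d \<noteq> 0\<close> by blast
  next
    case False
    obtain d r where move: "hanoi_move n f d r" "{f d, r} = {f u, c1}"
      using u c1 hanoi_move_between[of "f u" c1 u n f] by auto
    have "f d = f u" "r = c1"
      using move False c1 by (auto simp: hanoi_move_def doubleton_eq_iff)
    then have "d \<noteq> 0" "d \<noteq> w" using u w by metis+
    moreover have "d \<in> {1..<n}" using move \<open>d \<noteq> 0\<close> by (auto simp: hanoi_move_def)
    moreover have "f w \<noteq> c1" using False w by auto
    ultimately have "\<not> upper_tower n (f(d := r))"
      using w \<open>r = c1\<close> by (intro not_upper_towerI[of d n w]) auto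
    then show ?thesis using move \<open>d \<noteq> 0\<close> \<open>r = c1\<close> c1 by blast
  qed
qed

lemma move_keeping_upper_split:
  assumes "l \<ge> 4" "lastd s = Some 0" "\<not> upper_tower n (pos s)"
  shows "\<exists>d p. legal l n ec s d p \<and> \<not> upper_tower n ((pos s)(d := p))"
proof -
  obtain d r where "hanoi_move n (pos s) d r" "r \<in> {1..4}" "d \<noteq> 0"
    and split: "\<not> upper_tower n ((pos s)(d := r))"
    using hanoi_move_keeping_upper_split[OF assms(3)] by blast
  then have "legal l n ec s d r"
    using assms(1,2) is_tower_imp_upper_tower by (intro legalI) auto
  with split show ?thesis by blast
qed

lemma exists_move_to_tower_blocked:
  assumes "n \<ge> 3" "l \<ge> 4" "\<not> is_tower n (pos s)"
  shows "\<exists>d p. legal l n ec s d p \<and> tower_blocked n (do_move n s d p)"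
proof (cases "lastd s = Some 0")
  case True
  then have "\<exists>d p. legal l n ec s d p \<and> \<not> upper_tower n ((pos s)(d := p))"
    using assms split_upper_tower[of n l s ec] move_keeping_upper_split[of l s n ec]
    by (cases "upper_tower n (pos s)") auto
  then show ?thesis by (auto simp: tower_blocked_def)
next
  case False
  then show ?thesis using assms move_smallest_to_tower_blocked[of n l s ec] by auto
qed

lemma not_can_force_win_if_no_tower_move:
  assumes "n \<ge> 3" "l \<ge> 4" "no_tower_move l n ec s"
  shows "\<not> can_force_win l n ec s"
proof
  assume "can_force_win l n ec s"
  then show False using assms(3)
  proof (induction rule: can_force_win.induct)
    case (1 s d p)
    define s' where "s' = do_move n s d p"
    have "\<not> is_tower n (pos s')"
      using "1"(1,3) by (simp add: no_tower_move_def s'_def)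
    then have "\<not> game_ends n ec s'" using game_ends_imp_is_tower by blast
    then have replies_lose: "\<And>d' p'. legal l n ec s' d' p' \<Longrightarrow>
        no_tower_move l n ec (do_move n s' d' p') \<Longrightarrow> False"
      using "1"(2) by (auto simp: s'_def)
    obtain d' p' where "legal l n ec s' d' p'" "tower_blocked n (do_move n s' d' p')"
      using exists_move_to_tower_blocked[OF assms(1,2) \<open>\<not> is_tower n (pos s')\<close>] by blast
    then show False using replies_lose no_tower_move_if_tower_blocked by blast
  qed
qed

theorem theorem2:
  fixes l n :: nat and ec :: ending_cond
  assumes "l \<ge> 4" and "n \<ge> 3" and "valid_ec l ec"
  shows "is_draw l n ec"
proof -
  have "\<not> can_force_win l n ec init_state"
    using assms(1,2) no_tower_move_init_state[of n]
    by (intro not_can_force_win_if_no_tower_move) auto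
  moreover have "legal l n ec init_state 0 2"
    using assms(1,2) by (intro legalI not_is_towerI[of 0 n 1]) (auto simp: hanoi_move_def init_state_def)
  moreover have "tower_blocked n (do_move n init_state 0 2)"
    by (simp add: tower_blocked_def)
  then have "\<not> can_force_win l n ec (do_move n init_state 0 2)"
    using assms(1,2) by (intro not_can_force_win_if_no_tower_move no_tower_move_if_tower_blocked)
  ultimately show ?thesis by (auto simp: is_draw_def forced_loss_def)
qed

end
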